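(* Let $N\ge 1$ and let $\lambda,\mu$ be complex parameters. Consider fields $x,\widetilde{x},\widehat{x},\widehat{\widetilde{x}}\in\mathbb{C}^N$ with indices taken modulo $N$. Suppose that $x,\widetilde{x},\widehat{x}$ satisfy, for all $k$, $$(E)\qquad \frac{\widetilde{x}_k-x_k+\lambda}{\widetilde{x}_k-x_k-\lambda}\cdot\frac{x_k-\widetilde{x}_{k-1}+\lambda}{x_k-\widetilde{x}_{k-1}-\lambda}=\frac{\widehat{x}_k-x_k+\mu}{\widehat{x}_k-x_k-\mu}\cdot\frac{x_k-\widehat{x}_{k-1}+\mu}{x_k-\widehat{x}_{k-1}-\mu}.$$ Consider the superposition formulas $$(S1)\quad \mu(\widehat{\widetilde{x}}_k-\widehat{x}_k)(x_{k+1}-\widetilde{x}_k)-\lambda(\widehat{\widetilde{x}}_k-\widetilde{x}_k)(x_{k+1}-\widehat{x}_k)+\lambda\mu(\lambda-\mu)=0,$$ $$(S2)\quad \mu(\widetilde{x}_{k+1}-x_{k+1})(\widehat{x}_{k+1}-\widehat{\widetilde{x}}_k)-\lambda(\widehat{x}_{k+1}-x_{k+1})(\widetilde{x}_{k+1}-\widehat{\widetilde{x}}_k)+\lambda\mu(\lambda-\mu)=0.$$ Then, by virtue of $(E)$, (S1) and (S2) are equivalent, and if $\widehat{\widetilde{x}}$ is defined by either of them, then for all $k$: $$(E_1)\quad \frac{\widetilde{x}_k-x_k+\lambda}{\widetilde{x}_k-x_k-\lambda}\cdot\frac{x_{k+1}-\widetilde{x}_k+\lambda}{x_{k+1}-\widetilde{x}_k-\lambda}=\frac{\widehat{\widetilde{x}}_k-\widetilde{x}_k+\mu}{\widehat{\widetilde{x}}_k-\widetilde{x}_k-\mu}\cdot\frac{\widetilde{x}_k-\widehat{\widetilde{x}}_{k-1}+\mu}{\widetilde{x}_k-\widehat{\widetilde{x}}_{k-1}-\mu},$$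 $$(E_2)\quad \frac{\widehat{x}_k-x_k+\mu}{\widehat{x}_k-x_k-\mu}\cdot\frac{x_{k+1}-\widehat{x}_k+\mu}{x_{k+1}-\widehat{x}_k-\mu}=\frac{\widehat{\widetilde{x}}_k-\widehat{x}_k+\lambda}{\widehat{\widetilde{x}}_k-\widehat{x}_k-\lambda}\cdot\frac{\widehat{x}_k-\widehat{\widetilde{x}}_{k-1}+\lambda}{\widehat{x}_k-\widehat{\widetilde{x}}_{k-1}-\lambda},$$ $$(E_{12})\quad \frac{\widehat{\widetilde{x}}_k-\widehat{x}_k+\lambda}{\widehat{\widetilde{x}}_k-\widehat{x}_k-\lambda}\cdot\frac{\widehat{x}_{k+1}-\widehat{\widetilde{x}}_k+\lambda}{\widehat{x}_{k+1}-\widehat{\widetilde{x}}_k-\lambda}=\frac{\widehat{\widetilde{x}}_k-\widetilde{x}_k+\mu}{\widehat{\widetilde{x}}_k-\widetilde{x}_k-\mu}\cdot\frac{\widetilde{x}_{k+1}-\widehat{\widetilde{x}}_k+\mu}{\widetilde{x}_{k+1}-\widehat{\widetilde{x}}_k-\mu}.$$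
   Context: These are the corner equations for two Bäcklund transformations $F_\lambda,F_\mu$ of the periodic symmetric rational multiplicative Toda-type system $\ddot x_k=-(\dot x_k^2-1)\big(\frac{1}{x_{k+1}-x_k}-\frac{1}{x_k-x_{k-1}}\big)$, where $F_\lambda:(x,p)\mapsto(\widetilde x,\widetilde p)$ is $e^{2p_k}=\frac{\widetilde x_k-x_k+\lambda}{\widetilde x_k-x_k-\lambda}\cdot\frac{x_k-\widetilde x_{k-1}+\lambda}{x_k-\widetilde x_{k-1}-\lambda}$, $e^{2\widetilde p_k}=\frac{\widetilde x_k-x_k+\lambda}{\widetilde x_k-x_k-\lambda}\cdot\frac{x_{k+1}-\widetilde x_k+\lambda}{x_{k+1}-\widetilde x_k-\lambda}$; hats denote the action of $F_\mu$. *)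

theory Defs
  imports Complex_Main
begin

end

theory Submission
  imports Defs
begin

text \<open>Clearing denominators, each lattice equation
  \<open>(A + l)/(A - l) \<cdot> (B + l)/(B - l) = (C + m)/(C - m) \<cdot> (D + m)/(D - m)\<close> becomes the vanishing
  of the polynomial \<open>corner_poly l m A B C D\<close>.  Both superposition formulas are the relation
  \<open>superposition l m a t h X = 0\<close>, linear in \<open>X\<close>, taken at the vertex triples
  \<open>(x\<^sub>k\<^sub>+\<^sub>1, x~\<^sub>k, x^\<^sub>k)\<close> and \<open>(x\<^sub>k\<^sub>+\<^sub>1, x~\<^sub>k\<^sub>+\<^sub>1, x^\<^sub>k\<^sub>+\<^sub>1)\<close>; equation (E) at site \<open>k + 1\<close> makes
  these two linear relations have the same root.  With the coefficients of \<open>X\<close> nonzero,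
  each of (E1), (E2), (E12) is then a polynomial consequence of (E) and the superposition
  relations at sites \<open>k - 1\<close>, \<open>k\<close>, \<open>k + 1\<close>, found by a Groebner basis computation.\<close>

definition corner_poly :: "'a::field \<Rightarrow> 'a \<Rightarrow> 'a \<Rightarrow> 'a \<Rightarrow> 'a \<Rightarrow> 'a \<Rightarrow> 'a" where
  "corner_poly l m A B C D = l*(A+B)*C*D - m*A*B*(C+D) + l*m*(m*(A+B) - l*(C+D))"

definition superposition :: "'a::field \<Rightarrow> 'a \<Rightarrow> 'a \<Rightarrow> 'a \<Rightarrow> 'a \<Rightarrow> 'a \<Rightarrow> 'a" where
  "superposition l m a t h X = m*(X-h)*(a-t) - l*(X-t)*(a-h) + l*m*(l-m)"

lemma cayley_prod_eq_iff_corner_poly: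
  fixes l m A B C D :: "'a::field_char_0"
  assumes "A - l \<noteq> 0" "B - l \<noteq> 0" "C - m \<noteq> 0" "D - m \<noteq> 0"
  shows "(A+l)/(A-l) * ((B+l)/(B-l)) = (C+m)/(C-m) * ((D+m)/(D-m)) \<longleftrightarrow> corner_poly l m A B C D = 0"
proof -
  have cross: "(A+l)*(B+l)*((C-m)*(D-m)) - (C+m)*(D+m)*((A-l)*(B-l)) = 2 * corner_poly l m A B C D"
    unfolding corner_poly_def by algebra
  have "(A+l)/(A-l) * ((B+l)/(B-l)) = (C+m)/(C-m) * ((D+m)/(D-m)) \<longleftrightarrow>
        (A+l)*(B+l)*((C-m)*(D-m)) = (C+m)*(D+m)*((A-l)*(B-l))"
    using assms by (simp add: frac_eq_eq)
  also have "\<dots> \<longleftrightarrow> 2 * corner_poly l m A B C D = 0"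
    by (simp only: cross[symmetric] right_minus_eq)
  finally show ?thesis by simp
qed

lemma superposition_step_iff:
  fixes l m a1 t0 t1 h0 h1 X :: "'a::field"
  assumes "corner_poly l m (t1-a1) (a1-t0) (h1-a1) (a1-h0) = 0"
    and "m*(a1-t0) - l*(a1-h0) \<noteq> 0" "m*(a1-t1) - l*(a1-h1) \<noteq> 0"
  shows "superposition l m a1 t0 h0 X = 0 \<longleftrightarrow> superposition l m a1 t1 h1 X = 0"
  using assms unfolding corner_poly_def superposition_def by algebra

lemma superposition_tilde_equation:
  fixes l m a0 a1 t0 t1 h0 h1 X X' :: "'a::field"
  assumes "superposition l m a1 t1 h1 X = 0" "superposition l m a0 t0 h0 X' = 0"
    and "corner_poly l m (t1-a0) (a0-t0) (h1-a0) (a0-h0) = 0"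
    and "m*(a1-t1) - l*(a1-h1) \<noteq> 0" "m*(a0-t0) - l*(a0-h0) \<noteq> 0"
  shows "corner_poly l m (t1-a0) (a1-t1) (X-t1) (t1-X') = 0"
  using assms unfolding corner_poly_def superposition_def by algebra

lemma superposition_hat_equation:
  fixes l m a0 a1 t0 t1 h0 h1 X X' :: "'a::field"
  assumes "superposition l m a1 t1 h1 X = 0" "superposition l m a0 t0 h0 X' = 0"
    and "corner_poly l m (t1-a0) (a0-t0) (h1-a0) (a0-h0) = 0"
    and "m*(a1-t1) - l*(a1-h1) \<noteq> 0" "m*(a0-t0) - l*(a0-h0) \<noteq> 0"
  shows "corner_poly m l (h1-a0) (a1-h1) (X-h1) (h1-X') = 0"
  using assms unfolding corner_poly_def superposition_def by algebra

lemma superposition_tilde_hat_equation: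
  fixes l m a1 t0 t1 h0 h1 X :: "'a::field"
  assumes "superposition l m a1 t0 h0 X = 0" "superposition l m a1 t1 h1 X = 0"
    and "corner_poly l m (t1-a1) (a1-t0) (h1-a1) (a1-h0) = 0"
    and "m*(a1-t0) - l*(a1-h0) \<noteq> 0" "m*(a1-t1) - l*(a1-h1) \<noteq> 0"
  shows "corner_poly l m (X-h0) (h1-X) (X-t0) (t1-X) = 0"
  using assms unfolding corner_poly_def superposition_def by algebra

lemma superposition_shift_iff:
  fixes x xt xh :: "int \<Rightarrow> 'a::field"
  assumes corner: "\<And>k. corner_poly l m (xt k - x k) (x k - xt (k-1)) (xh k - x k) (x k - xh (k-1)) = 0"
    and coeff: "\<And>k. m*(x (k+1) - xt k) - l*(x (k+1) - xh k) \<noteq> 0"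
    and coeff_next: "\<And>k. m*(x (k+1) - xt (k+1)) - l*(x (k+1) - xh (k+1)) \<noteq> 0"
  shows "superposition l m (x (k+1)) (xt k) (xh k) X = 0
     \<longleftrightarrow> superposition l m (x (k+1)) (xt (k+1)) (xh (k+1)) X = 0"
proof -
  have "corner_poly l m (xt (k+1) - x (k+1)) (x (k+1) - xt k) (xh (k+1) - x (k+1)) (x (k+1) - xh k) = 0"
    using corner[of "k+1"] by simp
  then show ?thesis
    using superposition_step_iff coeff coeff_next by blast
qed

lemma superposition_corner_equations:
  fixes x xt xh xht :: "int \<Rightarrow> 'a::field"
  assumes corner: "\<And>k. corner_poly l m (xt k - x k) (x k - xt (k-1)) (xh k - x k) (x k - xh (k-1)) = 0"
    and coeff: "\<And>k. m*(x (k+1) - xt k) - l*(x (k+1) - xh k) \<noteq> 0"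
    and coeff_next: "\<And>k. m*(x (k+1) - xt (k+1)) - l*(x (k+1) - xh (k+1)) \<noteq> 0"
    and S1: "\<And>k. superposition l m (x (k+1)) (xt k) (xh k) (xht k) = 0"
  shows "corner_poly l m (xt k - x k) (x (k+1) - xt k) (xht k - xt k) (xt k - xht (k-1)) = 0"
    and "corner_poly m l (xh k - x k) (x (k+1) - xh k) (xht k - xh k) (xh k - xht (k-1)) = 0"
    and "corner_poly l m (xht k - xh k) (xh (k+1) - xht k) (xht k - xt k) (xt (k+1) - xht k) = 0"
proof -
  have prev: "superposition l m (x k) (xt (k-1)) (xh (k-1)) (xht (k-1)) = 0"
    using S1[of "k-1"] by simp
  have coeff_prev: "m*(x k - xt (k-1)) - l*(x k - xh (k-1)) \<noteq> 0"
    using coeff[of "k-1"] by simp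
  have corner_next: "corner_poly l m (xt (k+1) - x (k+1)) (x (k+1) - xt k) (xh (k+1) - x (k+1)) (x (k+1) - xh k) = 0"
    using corner[of "k+1"] by simp
  have S2: "superposition l m (x (k+1)) (xt (k+1)) (xh (k+1)) (xht k) = 0"
    using superposition_shift_iff[OF corner coeff coeff_next] S1 by blast
  show "corner_poly l m (xt k - x k) (x (k+1) - xt k) (xht k - xt k) (xt k - xht (k-1)) = 0"
    using superposition_tilde_equation[OF S1 prev corner coeff coeff_prev] .
  show "corner_poly m l (xh k - x k) (x (k+1) - xh k) (xht k - xh k) (xh k - xht (k-1)) = 0"
    using superposition_hat_equation[OF S1 prev corner coeff coeff_prev] .
  show "corner_poly l m (xht k - xh k) (xh (k+1) - xht k) (xht k - xt k) (xt (k+1) - xht k) = 0"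
    using superposition_tilde_hat_equation[OF S1 S2 corner_next coeff coeff_next] .
qed

theorem theorem13:
  fixes N :: nat and lam mu :: complex
    and x xt xh xht :: "int \<Rightarrow> complex"
  assumes N: "N \<ge> 1"
    and per_x: "\<forall>k. x (k + int N) = x k"
    and per_xt: "\<forall>k. xt (k + int N) = xt k"
    and per_xh: "\<forall>k. xh (k + int N) = xh k"
    and per_xht: "\<forall>k. xht (k + int N) = xht k"
    \<comment> \<open>non-degeneracy: all denominators occurring in (E), (E1), (E2), (E12) are nonzero\<close>
    and nd_E: "\<forall>k. xt k - x k - lam \<noteq> 0 \<and> x k - xt (k - 1) - lam \<noteq> 0
                  \<and> xh k - x k - mu \<noteq> 0 \<and> x k - xh (k - 1) - mu \<noteq> 0"
    and nd_E12: "\<forall>k. x (k + 1) - xt k - lam \<noteq> 0 \<and> x (k + 1) - xh k - mu \<noteq> 0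
                  \<and> xht k - xt k - mu \<noteq> 0 \<and> xt k - xht (k - 1) - mu \<noteq> 0
                  \<and> xht k - xh k - lam \<noteq> 0 \<and> xh k - xht (k - 1) - lam \<noteq> 0
                  \<and> xh (k + 1) - xht k - lam \<noteq> 0 \<and> xt (k + 1) - xht k - mu \<noteq> 0"
    \<comment> \<open>xht is uniquely determined by (S1), resp. by (S2): the coefficient of xht k is nonzero\<close>
    and nd_S1: "\<forall>k. mu * (x (k + 1) - xt k) - lam * (x (k + 1) - xh k) \<noteq> 0"
    and nd_S2: "\<forall>k. lam * (xh (k + 1) - x (k + 1)) - mu * (xt (k + 1) - x (k + 1)) \<noteq> 0"
    and E: "\<forall>k. (xt k - x k + lam) / (xt k - x k - lam) * ((x k - xt (k - 1) + lam) / (x k - xt (k - 1) - lam))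
              = (xh k - x k + mu) / (xh k - x k - mu) * ((x k - xh (k - 1) + mu) / (x k - xh (k - 1) - mu))"
  shows "((\<forall>k. mu * (xht k - xh k) * (x (k + 1) - xt k) - lam * (xht k - xt k) * (x (k + 1) - xh k)
                + lam * mu * (lam - mu) = 0)
         \<longleftrightarrow>
         (\<forall>k. mu * (xt (k + 1) - x (k + 1)) * (xh (k + 1) - xht k) - lam * (xh (k + 1) - x (k + 1)) * (xt (k + 1) - xht k)
                + lam * mu * (lam - mu) = 0))
       \<and> ((\<forall>k. mu * (xht k - xh k) * (x (k + 1) - xt k) - lam * (xht k - xt k) * (x (k + 1) - xh k)
                + lam * mu * (lam - mu) = 0)
         \<longrightarrow>
         (\<forall>k.
           (xt k - x k + lam) / (xt k - x k - lam) * ((x (k + 1) - xt k + lam) / (x (k + 1) - xt k - lam))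
             = (xht k - xt k + mu) / (xht k - xt k - mu) * ((xt k - xht (k - 1) + mu) / (xt k - xht (k - 1) - mu))
         \<and> (xh k - x k + mu) / (xh k - x k - mu) * ((x (k + 1) - xh k + mu) / (x (k + 1) - xh k - mu))
             = (xht k - xh k + lam) / (xht k - xh k - lam) * ((xh k - xht (k - 1) + lam) / (xh k - xht (k - 1) - lam))
         \<and> (xht k - xh k + lam) / (xht k - xh k - lam) * ((xh (k + 1) - xht k + lam) / (xh (k + 1) - xht k - lam))
             = (xht k - xt k + mu) / (xht k - xt k - mu) * ((xt (k + 1) - xht k + mu) / (xt (k + 1) - xht k - mu))))"
proof -
  have corner: "corner_poly lam mu (xt k - x k) (x k - xt (k-1)) (xh k - x k) (x k - xh (k-1)) = 0" for k
    using E nd_E cayley_prod_eq_iff_corner_poly by blast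
  have coeff_next: "mu*(x (k+1) - xt (k+1)) - lam*(x (k+1) - xh (k+1)) \<noteq> 0" for k
    using nd_S2[rule_format, of k] by (simp add: algebra_simps)
  have S2_eq: "mu * (xt (k+1) - x (k+1)) * (xh (k+1) - xht k) - lam * (xh (k+1) - x (k+1)) * (xt (k+1) - xht k)
      + lam * mu * (lam - mu) = superposition lam mu (x (k+1)) (xt (k+1)) (xh (k+1)) (xht k)" for k
    by (simp add: superposition_def algebra_simps)
  have S12: "superposition lam mu (x (k+1)) (xt k) (xh k) X = 0
      \<longleftrightarrow> superposition lam mu (x (k+1)) (xt (k+1)) (xh (k+1)) X = 0" for k X
    using superposition_shift_iff[OF corner nd_S1[rule_format] coeff_next] .
  show ?thesis
    unfolding S2_eq superposition_def[symmetric]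
    using superposition_corner_equations[OF corner nd_S1[rule_format] coeff_next] S12 nd_E nd_E12
    by (simp only: cayley_prod_eq_iff_corner_poly nd_E nd_E12 not_False_eq_True) blast
qed

end
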